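(* Let $\mathcal N$ be a feed-forward ReLU network with any fixed weights and biases, and let $\mathcal N^{\mathrm{bias}}_0$ be the network with the same weights and all biases set to $0$. Then the total number of (non-empty) activation regions in $\mathbb R^{n_{\mathrm{in}}}$ of $\mathcal N^{\mathrm{bias}}_0$ is at most that of $\mathcal N$.
   Context: A feed-forward ReLU network $\mathcal N$ with input dimension $n_{\mathrm{in}}$ and output dimension $1$ has hidden layers $1,\dots,d$; edges only between consecutive layers (arbitrary connectivity, no tied weights). A neuron $z$ in layer $1$ has pre-activation $z(x)=\sum_i w_{z,i}x_i$; a neuron $z$ in layer $\ell\ge2$ has pre-activation $z(x)=\sum_{z'}w_{z,z'}\max\{0,z'(x)-b_{z'}\}$ over neurons $z'$ of layer $\ell-1$ joined to $z$; $b_z$ is its bias. The output is $\mathcal N(x)=\sum_z w_z\max\{0,z(x)-b_z\}-b_{\mathrm{out}}$ over neurons of layer $d$. An activation region is a non-empty set $\{x:\ \mathrm{sgn}(z(x)-b_z)=a_z\text{ for every hidden neuron }z\}$ for some $a_z\in\{-1,1\}$. *)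

theory Defs
  imports "HOL-Analysis.Analysis"
begin

text \<open>Missing edges are encoded by weight 0 (arbitrary connectivity between consecutive layers).\<close>

record ('n, 'z) relu_net =
  neurons :: "'z set"
  layer   :: "'z \<Rightarrow> nat"
  depth   :: nat
  win     :: "'z \<Rightarrow> 'n \<Rightarrow> real"
  wt      :: "'z \<Rightarrow> 'z \<Rightarrow> real"      \<comment> \<open>wt z z' : weight of edge from z' (layer l-1) to z (layer l)\<close>
  bias    :: "'z \<Rightarrow> real"
  wout    :: "'z \<Rightarrow> real"
  bout    :: real

definition wf_net :: "('n::finite, 'z) relu_net \<Rightarrow> bool" where
  "wf_net N \<longleftrightarrow> finite (neurons N) \<and> (\<forall>z\<in>neurons N. 1 \<le> layer N z \<and> layer N z \<le> depth N)"

text \<open>Pre-activation of neuron z, computed as if z were in layer l.\<close>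
fun preact_at :: "('n::finite, 'z) relu_net \<Rightarrow> nat \<Rightarrow> 'z \<Rightarrow> real^'n \<Rightarrow> real" where
  "preact_at N 0 z x = 0"
| "preact_at N (Suc 0) z x = (\<Sum>i\<in>UNIV. win N z i * x $ i)"
| "preact_at N (Suc (Suc l)) z x =
     (\<Sum>z'\<in>{z'\<in>neurons N. layer N z' = Suc l}.
        wt N z z' * max 0 (preact_at N (Suc l) z' x - bias N z'))"

definition preact :: "('n::finite, 'z) relu_net \<Rightarrow> 'z \<Rightarrow> real^'n \<Rightarrow> real" where
  "preact N z x = preact_at N (layer N z) z x"

definition net_output :: "('n::finite, 'z) relu_net \<Rightarrow> real^'n \<Rightarrow> real" where
  "net_output N x = (\<Sum>z\<in>{z\<in>neurons N. layer N z = depth N}. wout N z * max 0 (preact N z x - bias N z)) - bout N"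

definition activation_regions :: "('n::finite, 'z) relu_net \<Rightarrow> (real^'n) set set" where
  "activation_regions N =
     {R. R \<noteq> {} \<and> (\<exists>a. (\<forall>z\<in>neurons N. a z \<in> {-1, 1::real}) \<and>
          R = {x. \<forall>z\<in>neurons N. sgn (preact N z x - bias N z) = a z})}"

definition zero_bias :: "('n, 'z) relu_net \<Rightarrow> ('n, 'z) relu_net" where
  "zero_bias N = N\<lparr>bias := (\<lambda>_. 0), bout := 0\<rparr>"

end

theory Submission
  imports Defs
begin

text \<open>Without biases every pre-activation is positively homogeneous in the input, while the biases
  shift each pre-activation by a bounded amount. Hence for a point x where no neuron of the
  bias-free network vanishes, the point t x with t large has, in the original network, the same
  sign pattern as x has in the bias-free one. So every activation region of the bias-free network
  contributes a distinct sign pattern that is also realised by an activation region of the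
  original network.\<close>

lemma zero_bias_simps [simp]:
  "neurons (zero_bias N) = neurons N" "layer (zero_bias N) = layer N"
  "win (zero_bias N) = win N" "wt (zero_bias N) = wt N" "bias (zero_bias N) = (\<lambda>_. 0)"
  by (simp_all add: zero_bias_def)

lemma max_0_scale: "0 \<le> (t::real) \<Longrightarrow> max 0 (t * a) = t * max 0 a"
  by (cases "t = 0") (auto simp: max_def mult_le_0_iff zero_le_mult_iff)

lemma preact_at_scaleR_nonneg:
  assumes "bias N = (\<lambda>_. 0)" and "0 \<le> t"
  shows "preact_at N l z (t *\<^sub>R x) = t * preact_at N l z x"
  using assms
proof (induction N l z x rule: preact_at.induct)
  case (3 N l z x)
  then show ?case
    by (simp add: sum_distrib_left max_0_scale mult.left_commute)
qed (simp_all add: sum_distrib_left algebra_simps)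

lemma weighted_relu_shift_le:
  "\<bar>w * max 0 (a - b) - w * max 0 c\<bar> \<le> \<bar>w\<bar> * (\<bar>a - c\<bar> + \<bar>b\<bar>)" for w a b c :: real
proof -
  have "\<bar>max 0 (a - b) - max 0 c\<bar> \<le> \<bar>a - c\<bar> + \<bar>b\<bar>"
    by (simp add: max_def abs_if)
  then show ?thesis
    by (simp add: right_diff_distrib [symmetric] abs_mult mult_left_mono)
qed

lemma preact_at_zero_bias_diff_bounded:
  "\<exists>C. \<forall>x. \<bar>preact_at N l z x - preact_at (zero_bias N) l z x\<bar> \<le> C"
proof (induction l arbitrary: z rule: induct_nat_012)
  case (ge2 l)
  obtain C where C: "\<And>z x. \<bar>preact_at N (Suc l) z x - preact_at (zero_bias N) (Suc l) z x\<bar> \<le> C z"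
    using ge2.IH(2) by metis
  let ?S = "{z'\<in>neurons N. layer N z' = Suc l}"
  have "\<bar>preact_at N (Suc (Suc l)) z x - preact_at (zero_bias N) (Suc (Suc l)) z x\<bar>
      \<le> (\<Sum>z'\<in>?S. \<bar>wt N z z'\<bar> * (C z' + \<bar>bias N z'\<bar>))" for x
  proof -
    have "\<bar>preact_at N (Suc (Suc l)) z x - preact_at (zero_bias N) (Suc (Suc l)) z x\<bar>
        \<le> (\<Sum>z'\<in>?S. \<bar>wt N z z' * max 0 (preact_at N (Suc l) z' x - bias N z')
                       - wt N z z' * max 0 (preact_at (zero_bias N) (Suc l) z' x)\<bar>)"
      by (simp add: sum_subtractf [symmetric] sum_abs)
    also have "\<dots> \<le> (\<Sum>z'\<in>?S. \<bar>wt N z z'\<bar> * (C z' + \<bar>bias N z'\<bar>))"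
      by (intro sum_mono order_trans [OF weighted_relu_shift_le] mult_left_mono add_right_mono C)
        simp
    finally show ?thesis .
  qed
  then show ?case
    by blast
qed auto

lemma sgn_eq_if_dist_less_abs: "\<bar>y - c\<bar> < \<bar>c\<bar> \<Longrightarrow> sgn y = sgn c" for y c :: real
  by (auto simp: sgn_if abs_if split: if_splits)

lemma eventually_sgn_preact_scaleR:
  assumes "preact (zero_bias N) z x \<noteq> 0"
  shows "eventually (\<lambda>t. sgn (preact N z (t *\<^sub>R x) - bias N z) = sgn (preact (zero_bias N) z x))
    at_top"
proof -
  define p where "p = preact (zero_bias N) z x"
  obtain C where C: "\<And>y. \<bar>preact N z y - preact (zero_bias N) z y\<bar> \<le> C"
    unfolding preact_def using preact_at_zero_bias_diff_bounded by (metis zero_bias_simps(2))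
  have "sgn (preact N z (t *\<^sub>R x) - bias N z) = sgn p"
    if t: "t > (C + \<bar>bias N z\<bar>) / \<bar>p\<bar>" "t > 0" for t
  proof -
    have "preact (zero_bias N) z (t *\<^sub>R x) = t * p"
      unfolding p_def preact_def using \<open>t > 0\<close> by (simp add: preact_at_scaleR_nonneg)
    then have "\<bar>(preact N z (t *\<^sub>R x) - bias N z) - t * p\<bar> \<le> C + \<bar>bias N z\<bar>"
      using C [of "t *\<^sub>R x"] by linarith
    also have "\<dots> < \<bar>t * p\<bar>"
      using t assms by (simp add: p_def pos_divide_less_eq abs_mult)
    finally have "sgn (preact N z (t *\<^sub>R x) - bias N z) = sgn (t * p)"
      by (rule sgn_eq_if_dist_less_abs)
    then show ?thesis
      using \<open>t > 0\<close> by (simp add: sgn_mult)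
  qed
  moreover have "eventually (\<lambda>t. t > (C + \<bar>bias N z\<bar>) / \<bar>p\<bar> \<and> t > 0) at_top"
    by (intro eventually_conj eventually_gt_at_top)
  ultimately show ?thesis
    unfolding p_def [symmetric] by (auto elim: eventually_mono)
qed

definition sign_pattern :: "('n::finite, 'z) relu_net \<Rightarrow> real^'n \<Rightarrow> 'z \<Rightarrow> real" where
  "sign_pattern N x = restrict (\<lambda>z. sgn (preact N z x - bias N z)) (neurons N)"

definition generic_sign_patterns :: "('n::finite, 'z) relu_net \<Rightarrow> ('z \<Rightarrow> real) set" where
  "generic_sign_patterns N = sign_pattern N ` {x. \<forall>z\<in>neurons N. preact N z x \<noteq> bias N z}"

lemma sign_pattern_eq_restrict_iff:
  "sign_pattern N x = restrict a (neurons N) \<longleftrightarrow>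
    (\<forall>z\<in>neurons N. sgn (preact N z x - bias N z) = a z)"
  unfolding sign_pattern_def
proof
  assume eq: "restrict (\<lambda>z. sgn (preact N z x - bias N z)) (neurons N) = restrict a (neurons N)"
  show "\<forall>z\<in>neurons N. sgn (preact N z x - bias N z) = a z"
  proof
    fix z assume "z \<in> neurons N"
    then show "sgn (preact N z x - bias N z) = a z"
      using fun_cong [OF eq, of z] by simp
  qed
qed (rule restrict_ext, simp)

lemma activation_regions_eq_sign_pattern_fibres:
  "activation_regions N = (\<lambda>a. sign_pattern N -` {a}) ` generic_sign_patterns N"
proof (intro equalityI subsetI)
  fix R assume "R \<in> activation_regions N"
  then obtain a x where a: "\<forall>z\<in>neurons N. a z \<in> {-1, 1}" and x: "x \<in> R"
    and R: "R = {x. \<forall>z\<in>neurons N. sgn (preact N z x - bias N z) = a z}"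
    unfolding activation_regions_def by blast
  have "R = sign_pattern N -` {restrict a (neurons N)}"
    unfolding R by (auto simp: sign_pattern_eq_restrict_iff)
  moreover have "restrict a (neurons N) = sign_pattern N x"
    using x unfolding R sign_pattern_def by auto
  moreover have "\<forall>z\<in>neurons N. sgn (preact N z x - bias N z) \<noteq> 0"
    using a x unfolding R by auto
  then have "\<forall>z\<in>neurons N. preact N z x \<noteq> bias N z"
    by auto
  ultimately show "R \<in> (\<lambda>a. sign_pattern N -` {a}) ` generic_sign_patterns N"
    unfolding generic_sign_patterns_def by auto
next
  fix R assume "R \<in> (\<lambda>a. sign_pattern N -` {a}) ` generic_sign_patterns N"
  then obtain x where x: "\<forall>z\<in>neurons N. preact N z x \<noteq> bias N z"
    and R: "R = sign_pattern N -` {sign_pattern N x}"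
    unfolding generic_sign_patterns_def by blast
  have "R = {y. sign_pattern N y = restrict (sign_pattern N x) (neurons N)}"
    unfolding R by (simp add: sign_pattern_def vimage_def)
  also have "\<dots> = {y. \<forall>z\<in>neurons N. sgn (preact N z y - bias N z) = sign_pattern N x z}"
    unfolding sign_pattern_eq_restrict_iff ..
  finally have "R = \<dots>" .
  moreover have "\<forall>z\<in>neurons N. sign_pattern N x z \<in> {-1, 1}"
    using x by (auto simp: sign_pattern_def sgn_if)
  moreover have "x \<in> R"
    using R by simp
  ultimately show "R \<in> activation_regions N"
    unfolding activation_regions_def by (intro CollectI conjI exI [of _ "sign_pattern N x"]) auto
qed

lemma card_activation_regions:
  "card (activation_regions N) = card (generic_sign_patterns N)"
proof -
  have "inj_on (\<lambda>a. sign_pattern N -` {a}) (generic_sign_patterns N)"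
    by (rule inj_onI) (auto simp: generic_sign_patterns_def)
  then show ?thesis
    by (simp add: activation_regions_eq_sign_pattern_fibres card_image)
qed

lemma finite_generic_sign_patterns:
  assumes "finite (neurons N)"
  shows "finite (generic_sign_patterns N)"
proof (rule finite_subset)
  show "generic_sign_patterns N \<subseteq> neurons N \<rightarrow>\<^sub>E {-1, 1}"
    by (auto simp: generic_sign_patterns_def sign_pattern_def sgn_if split: if_splits)
  show "finite (neurons N \<rightarrow>\<^sub>E {-1, 1 :: real})"
    using assms by (simp add: finite_PiE)
qed

lemma generic_sign_patterns_zero_bias_subset:
  assumes "finite (neurons N)"
  shows "generic_sign_patterns (zero_bias N) \<subseteq> generic_sign_patterns N"
proof
  fix a assume "a \<in> generic_sign_patterns (zero_bias N)"
  then obtain x where x: "\<forall>z\<in>neurons N. preact (zero_bias N) z x \<noteq> 0"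
    and a: "a = sign_pattern (zero_bias N) x"
    by (auto simp: generic_sign_patterns_def)
  have "eventually (\<lambda>t. \<forall>z\<in>neurons N.
      sgn (preact N z (t *\<^sub>R x) - bias N z) = sgn (preact (zero_bias N) z x)) at_top"
    using assms x by (simp add: eventually_ball_finite eventually_sgn_preact_scaleR)
  then obtain t where t: "\<forall>z\<in>neurons N.
      sgn (preact N z (t *\<^sub>R x) - bias N z) = sgn (preact (zero_bias N) z x)"
    using eventually_happens' trivial_limit_at_top_linorder by blast
  have "a = sign_pattern N (t *\<^sub>R x)"
    unfolding a sign_pattern_def using t by (auto intro: restrict_ext)
  moreover have "\<forall>z\<in>neurons N. preact N z (t *\<^sub>R x) \<noteq> bias N z"
    using t x by (metis right_minus_eq sgn_0_0)
  ultimately show "a \<in> generic_sign_patterns N"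
    unfolding generic_sign_patterns_def by blast
qed

theorem mainTheorem16:
  fixes N :: "('n::finite, 'z) relu_net"
  assumes "wf_net N"
  shows "card (activation_regions (zero_bias N)) \<le> card (activation_regions N)"
proof -
  have "finite (neurons N)"
    using assms by (simp add: wf_net_def)
  then show ?thesis
    unfolding card_activation_regions
    by (intro card_mono finite_generic_sign_patterns generic_sign_patterns_zero_bias_subset)
qed

end
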